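(* For all integers $n, k \geq 1$ with $n \geq k$, $$\sum_{i=k}^{n} \frac{s(n-1,i-1)\, S(i,k)}{i} = \frac{1}{n}\binom{n}{k} B_{n-k}^*.$$
   Context: For $n \geq 0$, $X^{\underline{n}} := X(X-1)\cdots(X-n+1)$ ($X^{\underline{0}}=1$). The (signed) Stirling numbers of the first kind $s(n,k)$ are defined by $X^{\underline{n}} = \sum_{k=0}^{n} s(n,k) X^k$, and the Stirling numbers of the second kind $S(n,k)$ by $X^n = \sum_{k=0}^{n} S(n,k) X^{\underline{k}}$ (for all $n\ge 0$), with $s(n,k)=S(n,k)=0$ when $n<k$. The Bernoulli numbers of the second kind $B_n^*$ are defined by $\frac{t}{\log(1+t)} = \sum_{n \ge 0} B_n^* \frac{t^n}{n!}$. *)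

theory Defs
  imports "HOL-Combinatorics.Stirling" "HOL-Computational_Algebra.Computational_Algebra"
begin

definition falling_poly :: "nat \<Rightarrow> int poly" where
  "falling_poly n = (\<Prod>i<n. [:- of_nat i, 1:])"

definition stirling1s :: "nat \<Rightarrow> nat \<Rightarrow> int" where
  "stirling1s n k = coeff (falling_poly n) k"

text \<open>Bernoulli numbers of the second kind: t / log(1+t) = sum B*_n t^n / n!.
  fps_ln 1 is the formal series of log(1+t).\<close>
definition bernoulli2 :: "nat \<Rightarrow> real" where
  "bernoulli2 n = fact n * ((fps_X / fps_ln (1::real)) $ n)"

end

theory Submission
  imports Defs
begin

(* Write L = log(1 + t). The exponential generating function of the j-th column of the
   signed Stirling numbers of the first kind is L^j / j!, so orthogonality of s and S says
   that sum_{i <= n} S(i,k) L^i / i! agrees with t^k / k! up to order n. Since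
   t L^(i-1) = (t / L) L^i, the term s(n-1,i-1) / i is (n-1)!/i! times the t^n coefficient
   of (t / L) L^i; summing against S(i,k) leaves (n-1)!/k! times the t^(n-k) coefficient
   of t / L, which is B*_(n-k) / (n-k)!. *)

lemma falling_poly_Suc: "falling_poly (Suc m) = [:- of_nat m, 1:] * falling_poly m"
  by (simp add: falling_poly_def lessThan_Suc)

lemma stirling1s_0_left: "stirling1s 0 j = (if j = 0 then 1 else 0)"
  by (simp add: stirling1s_def falling_poly_def coeff_1)

lemma stirling1s_Suc:
  "stirling1s (Suc m) j = (if j = 0 then 0 else stirling1s m (j - 1)) - of_nat m * stirling1s m j"
  by (cases j) (simp_all add: stirling1s_def falling_poly_Suc)

lemma stirling1s_Suc_0: "stirling1s (Suc m) 0 = 0"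
  by (induction m) (simp_all add: stirling1s_Suc stirling1s_0_left)

lemma stirling1s_eq_0: "m < j \<Longrightarrow> stirling1s m j = 0"
  by (induction m arbitrary: j) (simp_all add: stirling1s_0_left stirling1s_Suc)

lemma stirling1s_Stirling_orthogonal:
  "(\<Sum>i\<le>m. stirling1s m i * int (Stirling i k)) = (if m = k then 1 else 0)"
proof (induction m arbitrary: k)
  case 0
  then show ?case by (simp add: stirling1s_0_left)
next
  case (Suc m)
  have shift: "(\<Sum>i\<le>Suc m. (if i = 0 then 0 else stirling1s m (i - 1)) * int (Stirling i k))
      = (\<Sum>i\<le>m. stirling1s m i * int (Stirling (Suc i) k))"
    by (subst sum.atMost_Suc_shift) simp
  have "(\<Sum>i\<le>Suc m. stirling1s (Suc m) i * int (Stirling i k))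
      = (\<Sum>i\<le>m. stirling1s m i * int (Stirling (Suc i) k))
        - int m * (\<Sum>i\<le>Suc m. stirling1s m i * int (Stirling i k))"
    by (simp only: stirling1s_Suc left_diff_distrib sum_subtractf shift sum_distrib_left mult.assoc)
  also have "(\<Sum>i\<le>Suc m. stirling1s m i * int (Stirling i k)) = (if m = k then 1 else 0)"
    using Suc.IH by (simp add: stirling1s_eq_0)
  finally have rec: "(\<Sum>i\<le>Suc m. stirling1s (Suc m) i * int (Stirling i k))
      = (\<Sum>i\<le>m. stirling1s m i * int (Stirling (Suc i) k))
        - int m * (if m = k then 1 else 0)" .
  show ?case
  proof (cases k)
    case 0
    then show ?thesis unfolding rec by simp
  next
    case (Suc k')
    then have "(\<Sum>i\<le>m. stirling1s m i * int (Stirling (Suc i) k))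
        = int k * (\<Sum>i\<le>m. stirling1s m i * int (Stirling i k))
          + (\<Sum>i\<le>m. stirling1s m i * int (Stirling i k'))"
      by (simp add: algebra_simps sum.distrib sum_distrib_left)
    with Suc show ?thesis unfolding rec Suc.IH by simp
  qed
qed

(* The coefficients of (1 + t) (L^(j+1))' = (j + 1) L^j. *)
lemma fps_ln_power_deriv_rec:
  fixes L :: "'a::field_char_0 fps"
  defines "L \<equiv> fps_ln 1"
  shows "of_nat (Suc m) * (L ^ Suc j) $ Suc m + of_nat m * (L ^ Suc j) $ m
         = of_nat (Suc j) * (L ^ j) $ m"
proof -
  have "(1 + fps_X) * inverse (1 + fps_X :: 'a fps) = 1"
    by (rule inverse_mult_eq_1') simp
  moreover have "fps_deriv (L ^ Suc j) = fps_const (of_nat (Suc j)) * inverse (1 + fps_X) * L ^ j"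
    by (simp only: L_def fps_deriv_power fps_ln_deriv) simp
  ultimately have "(1 + fps_X) * fps_deriv (L ^ Suc j) = fps_const (of_nat (Suc j)) * L ^ j"
    by (metis (no_types, lifting) mult.assoc mult.commute mult.left_neutral)
  then have "(fps_deriv (L ^ Suc j) + fps_X * fps_deriv (L ^ Suc j)) $ m
      = of_nat (Suc j) * (L ^ j) $ m"
    by (simp add: distrib_right)
  then show ?thesis
    by (cases m) (simp_all del: power_Suc add: algebra_simps)
qed

lemma fps_ln_power_nth:
  "fact m * (fps_ln (1::'a::field_char_0) ^ j) $ m = fact j * of_int (stirling1s m j)"
proof (induction m arbitrary: j)
  case 0
  then show ?case by (cases j) (simp_all add: stirling1s_0_left)
next
  case (Suc m)
  show ?case
  proof (cases j)
    case 0
    then show ?thesis by (simp add: stirling1s_Suc_0)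
  next
    case (Suc j')
    let ?L = "fps_ln (1::'a)"
    have "fact (Suc m) * (?L ^ Suc j') $ Suc m = fact m * (of_nat (Suc m) * (?L ^ Suc j') $ Suc m)"
      by simp
    also have "\<dots> = fact m * (of_nat (Suc j') * (?L ^ j') $ m - of_nat m * (?L ^ Suc j') $ m)"
      using fps_ln_power_deriv_rec[of m j'] by (metis eq_diff_eq)
    also have "\<dots> = of_nat (Suc j') * (fact m * (?L ^ j') $ m)
        - of_nat m * (fact m * (?L ^ Suc j') $ m)"
      by (simp add: algebra_simps)
    also have "\<dots> = fact (Suc j') * of_int (stirling1s (Suc m) (Suc j'))"
      by (simp only: Suc.IH) (simp add: stirling1s_Suc algebra_simps)
    finally show ?thesis by (simp only: Suc)
  qed
qed

lemma fps_X_div_fps_ln_mult: "fps_X / fps_ln 1 * fps_ln (1::'a::field_char_0) = fps_X"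
proof -
  have "subdegree (fps_ln (1::'a)) = 1"
    by (rule subdegreeI) (auto simp: fps_ln_nth)
  then have "fps_ln (1::'a) dvd fps_X"
    by (subst fps_dvd_iff) auto
  then show ?thesis by simp
qed

lemma fps_X_div_fps_ln_mult_power_nth:
  "(fps_X / fps_ln 1 * fps_ln (1::'a::field_char_0) ^ Suc j) $ Suc m
   = fact j * of_int (stirling1s m j) / fact m"
proof -
  let ?L = "fps_ln (1::'a)"
  have "fps_X / ?L * ?L ^ Suc j = (fps_X / ?L * ?L) * ?L ^ j"
    by (simp only: power_Suc mult.assoc)
  also have "\<dots> = fps_X * ?L ^ j"
    by (simp only: fps_X_div_fps_ln_mult)
  finally have "(fps_X / ?L * ?L ^ Suc j) $ Suc m = (fps_X * ?L ^ j) $ Suc m"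
    by (rule arg_cong)
  with fps_ln_power_nth[of m j] show ?thesis
    by (simp add: field_simps)
qed

lemma sum_Stirling_fps_ln_power_nth:
  assumes "m \<le> n"
  shows "(\<Sum>i\<le>n. fps_const (of_nat (Stirling i k) / fact i)
            * fps_ln (1::'a::field_char_0) ^ i) $ m
         = (if m = k then 1 / fact k else 0)"
proof -
  have "(fps_ln (1::'a) ^ i) $ m = fact i * of_int (stirling1s m i) / fact m" for i
    using fps_ln_power_nth[of m i] by (simp add: field_simps)
  then have "(\<Sum>i\<le>n. fps_const (of_nat (Stirling i k) / fact i) * fps_ln (1::'a) ^ i) $ m
      = of_int (\<Sum>i\<le>n. stirling1s m i * int (Stirling i k)) / fact m"
    by (simp add: fps_sum_nth of_int_sum sum_divide_distrib mult_ac)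
  also have "(\<Sum>i\<le>n. stirling1s m i * int (Stirling i k))
      = (\<Sum>i\<le>m. stirling1s m i * int (Stirling i k))"
    using assms by (intro sum.mono_neutral_right) (simp_all add: stirling1s_eq_0)
  finally show ?thesis
    unfolding stirling1s_Stirling_orthogonal by simp
qed

theorem theorem4:
  fixes n k :: nat
  assumes "k \<ge> 1" and "n \<ge> 1" and "n \<ge> k"
  shows "(\<Sum>i=k..n. real_of_int (stirling1s (n - 1) (i - 1)) * real (Stirling i k) / real i)
         = 1 / real n * real (n choose k) * bernoulli2 (n - k)"
proof -
  define L where "L = fps_ln (1::real)"
  define G where "G = fps_X / L"
  define P where "P = (\<Sum>i\<le>n. fps_const (real (Stirling i k) / fact i) * L ^ i)"
  have "(\<Sum>i=k..n. real_of_int (stirling1s (n - 1) (i - 1)) * real (Stirling i k) / real i)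
      = (\<Sum>i\<le>n. fact (n - 1) * (real (Stirling i k) / fact i * (G * L ^ i) $ n))"
  proof (rule sum.mono_neutral_cong_left)
    fix i
    assume "i \<in> {k..n}"
    with assms obtain i' n' where i: "i = Suc i'" and n: "n = Suc n'"
      by (metis Suc_pred' atLeastAtMost_iff le_trans less_eq_Suc_le One_nat_def)
    show "real_of_int (stirling1s (n - 1) (i - 1)) * real (Stirling i k) / real i
        = fact (n - 1) * (real (Stirling i k) / fact i * (G * L ^ i) $ n)"
      unfolding G_def L_def i n fps_X_div_fps_ln_mult_power_nth
      by (simp add: field_simps del: of_nat_Suc)
  qed auto
  also have "\<dots> = fact (n - 1) * (G * P) $ n"
    unfolding P_def sum_distrib_left fps_sum_nth mult.left_commute[of G] fps_mult_left_const_nth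
    by (simp add: mult_ac)
  also have "(G * P) $ n = (\<Sum>a=0..n. if a = n - k then G $ a / fact k else 0)"
    unfolding fps_mult_nth P_def L_def using assms
    by (intro sum.cong) (auto simp: sum_Stirling_fps_ln_power_nth)
  also have "\<dots> = G $ (n - k) / fact k"
    by simp
  also have "fact (n - 1) * (G $ (n - k) / fact k)
      = 1 / real n * real (n choose k) * bernoulli2 (n - k)"
    using assms by (simp add: bernoulli2_def G_def L_def binomial_fact field_simps fact_reduce)
  finally show ?thesis .
qed

end
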